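(* For a (nondegenerate) triangle $AB\Gamma$, let $\ell_1$ be the line perpendicular to $AB$ through $B$, $\ell_2$ the line perpendicular to $B\Gamma$ through $\Gamma$, and $\ell_3$ the line perpendicular to $\Gamma A$ through $A$, and let $A'B'\Gamma'$ be the triangle bounded by these three lines. Let $E$ and $E'$ be the areas of $AB\Gamma$ and $A'B'\Gamma'$. Then, over all triangles $AB\Gamma$, the ratio $E'/E$ has minimum value $3$, and $E'/E = 3$ holds if and only if $AB\Gamma$ is equilateral (in which case $A'B'\Gamma'$ is also equilateral). *)

theory Defs
  imports "HOL-Analysis.Analysis"
begin

definition tri_area :: "real^2 \<Rightarrow> real^2 \<Rightarrow> real^2 \<Rightarrow> real" where
  "tri_area P Q R =
     \<bar>(Q$1 - P$1) * (R$2 - P$2) - (Q$2 - P$2) * (R$1 - P$1)\<bar> / 2"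

definition perp_line_at :: "real^2 \<Rightarrow> real^2 \<Rightarrow> (real^2) set" where
  "perp_line_at X Y = {Z. (Z - Y) \<bullet> (Y - X) = 0}"

definition equilateral :: "real^2 \<Rightarrow> real^2 \<Rightarrow> real^2 \<Rightarrow> bool" where
  "equilateral P Q R \<longleftrightarrow> dist P Q = dist Q R \<and> dist Q R = dist R P"

end

theory Submission
  imports Defs
begin

text \<open>
  Write \<open>\<delta> = cross2 (B - A) (C - A)\<close> for twice the signed area of \<open>ABC\<close> and
  \<open>S = AB\<^sup>2 + BC\<^sup>2 + CA\<^sup>2\<close>. Solving the perpendicularity conditions shows that each side of
  \<open>A'B'C'\<close> is a side of \<open>ABC\<close> turned through a right angle and scaled by \<open>S / 2\<delta>\<close>,
  e.g. \<open>2\<delta> (B' - A') = S rot90 (C - B)\<close>. So \<open>A'B'C'\<close> is similar to \<open>ABC\<close> and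
  \<open>16 E' E = S\<^sup>2\<close>; the bound \<open>E'/E \<ge> 3\<close> is Weitzenboeck's inequality \<open>S\<^sup>2 \<ge> 48 E\<^sup>2\<close>,
  whose defect is \<open>2 \<Sum>(a\<^sup>2 - b\<^sup>2)\<^sup>2\<close> by Heron's formula and so vanishes exactly for
  equilateral triangles.
\<close>

definition cross2 :: "real^2 \<Rightarrow> real^2 \<Rightarrow> real" where
  "cross2 x y = x$1 * y$2 - x$2 * y$1"

definition rot90 :: "real^2 \<Rightarrow> real^2" where
  "rot90 x = vector [- x$2, x$1]"

definition side_sq_sum :: "'a::metric_space \<Rightarrow> 'a \<Rightarrow> 'a \<Rightarrow> real" where
  "side_sq_sum A B C = (dist A B)\<^sup>2 + (dist B C)\<^sup>2 + (dist C A)\<^sup>2"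

lemma side_sq_sum_nonneg: "side_sq_sum A B C \<ge> 0"
  by (simp add: side_sq_sum_def)

lemma rot90_nth [simp]: "rot90 x $ 1 = - x$2" "rot90 x $ 2 = x$1"
  by (simp_all add: rot90_def)

lemma rot90_diff: "rot90 (x - y) = rot90 x - rot90 y"
  by (simp add: vec_eq_iff forall_2)

lemma inner_real2: "(x::real^2) \<bullet> y = x$1 * y$1 + x$2 * y$2"
  by (simp add: inner_vec_def sum_2)

lemma dist_real2_sq: "(dist (x::real^2) y)\<^sup>2 = (x$1 - y$1)\<^sup>2 + (x$2 - y$2)\<^sup>2"
proof -
  have "(dist x y)\<^sup>2 = (x - y) \<bullet> (x - y)"
    by (simp add: dist_norm power2_norm_eq_inner)
  then show ?thesis
    by (simp add: inner_real2 power2_eq_square)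
qed

lemma norm_rot90 [simp]: "norm (rot90 x) = norm x"
  by (simp add: norm_eq_sqrt_inner inner_real2 algebra_simps)

lemma cross2_rot90 [simp]: "cross2 (rot90 x) (rot90 y) = cross2 x y"
  by (simp add: cross2_def algebra_simps)

lemma cross2_scaleR [simp]: "cross2 (a *\<^sub>R x) (b *\<^sub>R y) = a * b * cross2 x y"
  by (simp add: cross2_def algebra_simps)

lemma cross2_rotate: "cross2 (C - B) (A - B) = cross2 (B - A) (C - A)"
  by (simp add: cross2_def algebra_simps)

lemma cross2_scaleR_eq: "cross2 x y *\<^sub>R z = (z \<bullet> y) *\<^sub>R rot90 x - (z \<bullet> x) *\<^sub>R rot90 y"
  by (simp add: vec_eq_iff forall_2 cross2_def inner_real2 algebra_simps)

lemma exists_inner_eq: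
  assumes "cross2 x y \<noteq> 0"
  shows "\<exists>z. z \<bullet> x = a \<and> z \<bullet> y = b"
proof
  let ?z = "(b *\<^sub>R rot90 x - a *\<^sub>R rot90 y) /\<^sub>R cross2 x y"
  have "(b *\<^sub>R rot90 x - a *\<^sub>R rot90 y) \<bullet> x = a * cross2 x y"
       "(b *\<^sub>R rot90 x - a *\<^sub>R rot90 y) \<bullet> y = b * cross2 x y"
    by (simp_all add: inner_real2 cross2_def algebra_simps)
  then show "?z \<bullet> x = a \<and> ?z \<bullet> y = b"
    using assms by simp
qed

lemma tri_area_cross2: "tri_area A B C = \<bar>cross2 (B - A) (C - A)\<bar> / 2"
  by (simp add: tri_area_def cross2_def)

lemma collinear_iff_cross2: "collinear {A, B, C} \<longleftrightarrow> cross2 (B - A) (C - A) = 0"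
proof -
  have "collinear {0, x, y} \<longleftrightarrow> cross2 x y = 0" for x y :: "real^2"
  proof
    assume "cross2 x y = 0"
    have "(x \<bullet> x) *\<^sub>R y - (x \<bullet> y) *\<^sub>R x = cross2 x y *\<^sub>R rot90 x"
      by (simp add: vec_eq_iff forall_2 cross2_def inner_real2 algebra_simps)
    with \<open>cross2 x y = 0\<close> have parallel: "(x \<bullet> x) *\<^sub>R y = (x \<bullet> y) *\<^sub>R x"
      by simp
    have "y = ((x \<bullet> y) / (x \<bullet> x)) *\<^sub>R x" if "x \<noteq> 0"
    proof -
      have "y = inverse (x \<bullet> x) *\<^sub>R ((x \<bullet> x) *\<^sub>R y)"
        using that by simp
      also have "\<dots> = ((x \<bullet> y) / (x \<bullet> x)) *\<^sub>R x"
        by (simp add: parallel divide_inverse_commute)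
      finally show ?thesis .
    qed
    then show "collinear {0, x, y}"
      by (auto simp: collinear_lemma)
  qed (auto simp: collinear_lemma cross2_def)
  moreover have "collinear {A, B, C} \<longleftrightarrow> collinear {0, B - A, C - A}"
    using collinear_3[of B A C] by (simp add: insert_commute)
  ultimately show ?thesis
    by simp
qed

lemma tri_area_pos_iff: "tri_area A B C > 0 \<longleftrightarrow> \<not> collinear {A, B, C}"
  by (simp add: tri_area_cross2 collinear_iff_cross2)

lemma perp_lines_meet:
  assumes "\<not> collinear {A, B, C}"
  shows "\<exists>P. P \<in> perp_line_at A B \<inter> perp_line_at B C"
proof -
  have "cross2 (B - A) (C - B) = cross2 (B - A) (C - A)"
    by (simp add: cross2_def algebra_simps)
  with assms have "cross2 (B - A) (C - B) \<noteq> 0"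
    by (simp add: collinear_iff_cross2)
  then obtain P where "P \<bullet> (B - A) = B \<bullet> (B - A)" "P \<bullet> (C - B) = C \<bullet> (C - B)"
    using exists_inner_eq by blast
  then have "P \<in> perp_line_at A B \<inter> perp_line_at B C"
    by (simp add: perp_line_at_def inner_diff_left)
  then show ?thesis ..
qed

lemma perp_triangle_edge_inner:
  fixes A B C A' B' :: "'a::real_inner"
  assumes "(A' - B) \<bullet> (B - A) = 0" "(A' - C) \<bullet> (C - B) = 0"
    and "(B' - C) \<bullet> (C - B) = 0" "(B' - A) \<bullet> (A - C) = 0"
  shows "2 * ((B' - A') \<bullet> (B - A)) = - side_sq_sum A B C"
    and "2 * ((B' - A') \<bullet> (C - A)) = - side_sq_sum A B C"
proof -
  have "2 * ((B' - A') \<bullet> (B - A)) + side_sq_sum A B C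
          = - 2 * ((A' - B) \<bullet> (B - A) + (B' - C) \<bullet> (C - B) + (B' - A) \<bullet> (A - C))"
    unfolding side_sq_sum_def dist_norm power2_norm_eq_inner
    by (simp add: inner_commute algebra_simps)
  moreover have "2 * ((B' - A') \<bullet> (C - A)) + side_sq_sum A B C
          = - 2 * ((A' - B) \<bullet> (B - A) + (A' - C) \<bullet> (C - B) + (B' - A) \<bullet> (A - C))"
    unfolding side_sq_sum_def dist_norm power2_norm_eq_inner
    by (simp add: inner_commute algebra_simps)
  ultimately show "2 * ((B' - A') \<bullet> (B - A)) = - side_sq_sum A B C"
    and "2 * ((B' - A') \<bullet> (C - A)) = - side_sq_sum A B C"
    using assms by simp_all
qed

lemma perp_triangle_edge:
  assumes "A' \<in> perp_line_at A B \<inter> perp_line_at B C"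
    and "B' \<in> perp_line_at B C \<inter> perp_line_at C A"
  shows "(2 * cross2 (B - A) (C - A)) *\<^sub>R (B' - A') = side_sq_sum A B C *\<^sub>R rot90 (C - B)"
proof -
  let ?z = "B' - A'" and ?S = "side_sq_sum A B C"
  have x: "2 * (?z \<bullet> (B - A)) = - ?S" and y: "2 * (?z \<bullet> (C - A)) = - ?S"
    using assms perp_triangle_edge_inner[of A' B A C B'] by (simp_all add: perp_line_at_def)
  have "(2 * cross2 (B - A) (C - A)) *\<^sub>R ?z = 2 *\<^sub>R (cross2 (B - A) (C - A) *\<^sub>R ?z)"
    by simp
  also have "\<dots> = (2 * (?z \<bullet> (C - A))) *\<^sub>R rot90 (B - A) - (2 * (?z \<bullet> (B - A))) *\<^sub>R rot90 (C - A)"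
    by (subst cross2_scaleR_eq) (simp only: scaleR_right_diff_distrib scaleR_scaleR)
  also have "\<dots> = ?S *\<^sub>R (rot90 (C - A) - rot90 (B - A))"
    unfolding x y by (simp add: algebra_simps)
  also have "\<dots> = ?S *\<^sub>R rot90 (C - B)"
    by (simp flip: rot90_diff)
  finally show ?thesis .
qed

lemma perp_triangle_edges:
  assumes "A' \<in> perp_line_at A B \<inter> perp_line_at B C"
    and "B' \<in> perp_line_at B C \<inter> perp_line_at C A"
    and "C' \<in> perp_line_at C A \<inter> perp_line_at A B"
  defines "D \<equiv> 2 * cross2 (B - A) (C - A)" and "S \<equiv> side_sq_sum A B C"
  shows "D *\<^sub>R (B' - A') = S *\<^sub>R rot90 (C - B)"
    and "D *\<^sub>R (C' - B') = S *\<^sub>R rot90 (A - C)"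
    and "D *\<^sub>R (A' - C') = S *\<^sub>R rot90 (B - A)"
proof -
  have D: "D = 2 * cross2 (C - B) (A - B)" "D = 2 * cross2 (A - C) (B - C)"
    by (simp_all add: D_def cross2_def algebra_simps)
  have S: "S = side_sq_sum B C A" "S = side_sq_sum C A B"
    by (simp_all add: S_def side_sq_sum_def)
  show "D *\<^sub>R (B' - A') = S *\<^sub>R rot90 (C - B)"
    unfolding D_def S_def using assms(1,2) by (rule perp_triangle_edge)
  show "D *\<^sub>R (C' - B') = S *\<^sub>R rot90 (A - C)"
    unfolding D(1) S(1) using assms(2,3) by (rule perp_triangle_edge)
  show "D *\<^sub>R (A' - C') = S *\<^sub>R rot90 (B - A)"
    unfolding D(2) S(2) using assms(3,1) by (rule perp_triangle_edge)
qed

lemma perp_triangle_area: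
  assumes "\<not> collinear {A, B, C}"
    and "A' \<in> perp_line_at A B \<inter> perp_line_at B C"
    and "B' \<in> perp_line_at B C \<inter> perp_line_at C A"
    and "C' \<in> perp_line_at C A \<inter> perp_line_at A B"
  shows "16 * tri_area A' B' C' * tri_area A B C = (side_sq_sum A B C)\<^sup>2"
proof -
  define D where "D = 2 * cross2 (B - A) (C - A)"
  define S where "S = side_sq_sum A B C"
  note edges = perp_triangle_edges[OF assms(2-4), folded D_def S_def]
  have "D \<noteq> 0"
    using assms(1) by (simp add: D_def collinear_iff_cross2)
  have e3: "D *\<^sub>R (C' - A') = S *\<^sub>R rot90 (A - B)"
  proof -
    have "D *\<^sub>R (C' - A') = - (D *\<^sub>R (A' - C'))"
      by (simp add: algebra_simps)
    also have "\<dots> = - (S *\<^sub>R rot90 (B - A))"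
      by (simp only: edges(3))
    also have "\<dots> = S *\<^sub>R rot90 (A - B)"
      by (simp add: rot90_diff algebra_simps)
    finally show ?thesis .
  qed
  have "D\<^sup>2 * cross2 (B' - A') (C' - A') = cross2 (D *\<^sub>R (B' - A')) (D *\<^sub>R (C' - A'))"
    by (simp add: power2_eq_square)
  also have "\<dots> = cross2 (S *\<^sub>R rot90 (C - B)) (S *\<^sub>R rot90 (A - B))"
    by (simp only: edges(1) e3)
  also have "\<dots> = S\<^sup>2 * D / 2"
    by (simp add: D_def cross2_rotate power2_eq_square)
  finally have "D * (2 * D * cross2 (B' - A') (C' - A')) = D * S\<^sup>2"
    by (simp add: power2_eq_square algebra_simps)
  then have "2 * D * cross2 (B' - A') (C' - A') = S\<^sup>2"
    using \<open>D \<noteq> 0\<close> by simp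
  moreover have "16 * tri_area A' B' C' * tri_area A B C = \<bar>2 * D * cross2 (B' - A') (C' - A')\<bar>"
    by (simp add: tri_area_cross2 D_def abs_mult)
  ultimately show ?thesis
    by (simp add: S_def)
qed

lemma perp_triangle_sides:
  assumes "A' \<in> perp_line_at A B \<inter> perp_line_at B C"
    and "B' \<in> perp_line_at B C \<inter> perp_line_at C A"
    and "C' \<in> perp_line_at C A \<inter> perp_line_at A B"
  shows "4 * tri_area A B C * dist A' B' = side_sq_sum A B C * dist B C"
    and "4 * tri_area A B C * dist B' C' = side_sq_sum A B C * dist C A"
    and "4 * tri_area A B C * dist C' A' = side_sq_sum A B C * dist A B"
proof -
  have scaled: "4 * tri_area A B C * norm z = side_sq_sum A B C * norm w"
    if "(2 * cross2 (B - A) (C - A)) *\<^sub>R z = side_sq_sum A B C *\<^sub>R rot90 w" for z w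
  proof -
    have "4 * tri_area A B C * norm z = norm ((2 * cross2 (B - A) (C - A)) *\<^sub>R z)"
      by (simp add: tri_area_cross2 abs_mult)
    also have "\<dots> = side_sq_sum A B C * norm w"
      by (simp add: that side_sq_sum_nonneg)
    finally show ?thesis .
  qed
  show "4 * tri_area A B C * dist A' B' = side_sq_sum A B C * dist B C"
       "4 * tri_area A B C * dist B' C' = side_sq_sum A B C * dist C A"
       "4 * tri_area A B C * dist C' A' = side_sq_sum A B C * dist A B"
    using perp_triangle_edges[OF assms, THEN scaled]
    by (simp_all add: dist_norm norm_minus_commute)
qed

lemma heron_sq:
  "16 * (tri_area A B C)\<^sup>2
     = 2 * ((dist A B)\<^sup>2 * (dist B C)\<^sup>2 + (dist B C)\<^sup>2 * (dist C A)\<^sup>2 + (dist C A)\<^sup>2 * (dist A B)\<^sup>2)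
       - ((dist A B)^4 + (dist B C)^4 + (dist C A)^4)"
proof -
  define x1 x2 y1 y2 where "x1 = B$1 - A$1" "x2 = B$2 - A$2" "y1 = C$1 - A$1" "y2 = C$2 - A$2"
  have "(tri_area A B C)\<^sup>2 = (x1 * y2 - x2 * y1)\<^sup>2 / 4"
    by (simp add: tri_area_def x1_x2_y1_y2_def power_divide)
  moreover have "(dist A B)\<^sup>2 = x1\<^sup>2 + x2\<^sup>2" "(dist C A)\<^sup>2 = y1\<^sup>2 + y2\<^sup>2"
    "(dist B C)\<^sup>2 = (y1 - x1)\<^sup>2 + (y2 - x2)\<^sup>2"
    by (simp_all add: dist_real2_sq x1_x2_y1_y2_def power2_commute)
  moreover have "(dist A B)^4 = ((dist A B)\<^sup>2)\<^sup>2" "(dist B C)^4 = ((dist B C)\<^sup>2)\<^sup>2"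
    "(dist C A)^4 = ((dist C A)\<^sup>2)\<^sup>2"
    by simp_all
  ultimately show ?thesis
    by simp algebra
qed

lemma weitzenboeck_identity:
  "(side_sq_sum A B C)\<^sup>2 - 48 * (tri_area A B C)\<^sup>2
     = 2 * (((dist A B)\<^sup>2 - (dist B C)\<^sup>2)\<^sup>2 + ((dist B C)\<^sup>2 - (dist C A)\<^sup>2)\<^sup>2
            + ((dist C A)\<^sup>2 - (dist A B)\<^sup>2)\<^sup>2)"
proof -
  have "48 * (tri_area A B C)\<^sup>2 = 3 * (16 * (tri_area A B C)\<^sup>2)"
    by simp
  then show ?thesis
    unfolding heron_sq side_sq_sum_def by algebra
qed

lemma equilateral_iff_sq:
  "equilateral A B C \<longleftrightarrow> (dist A B)\<^sup>2 = (dist B C)\<^sup>2 \<and> (dist B C)\<^sup>2 = (dist C A)\<^sup>2"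
  by (simp add: equilateral_def)

lemma weitzenboeck_inequality: "48 * (tri_area A B C)\<^sup>2 \<le> (side_sq_sum A B C)\<^sup>2"
  using weitzenboeck_identity[of A B C] by (smt (verit) zero_le_power2)

lemma weitzenboeck_eq_iff:
  "48 * (tri_area A B C)\<^sup>2 = (side_sq_sum A B C)\<^sup>2 \<longleftrightarrow> equilateral A B C"
proof -
  have "48 * (tri_area A B C)\<^sup>2 = (side_sq_sum A B C)\<^sup>2
          \<longleftrightarrow> ((dist A B)\<^sup>2 - (dist B C)\<^sup>2)\<^sup>2 + ((dist B C)\<^sup>2 - (dist C A)\<^sup>2)\<^sup>2
               + ((dist C A)\<^sup>2 - (dist A B)\<^sup>2)\<^sup>2 = 0"
    using weitzenboeck_identity[of A B C] by (smt (verit))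
  also have "\<dots> \<longleftrightarrow> equilateral A B C"
    by (auto simp: add_nonneg_eq_0_iff equilateral_iff_sq)
  finally show ?thesis .
qed

lemma perp_triangle_equilateral:
  assumes "\<not> collinear {A, B, C}" and "equilateral A B C"
    and "A' \<in> perp_line_at A B \<inter> perp_line_at B C"
    and "B' \<in> perp_line_at B C \<inter> perp_line_at C A"
    and "C' \<in> perp_line_at C A \<inter> perp_line_at A B"
  shows "equilateral A' B' C'"
proof -
  have "tri_area A B C \<noteq> 0"
    using assms(1) by (simp flip: tri_area_pos_iff)
  moreover have "4 * tri_area A B C * dist A' B' = 4 * tri_area A B C * dist B' C'"
      "4 * tri_area A B C * dist B' C' = 4 * tri_area A B C * dist C' A'"
    using perp_triangle_sides[OF assms(3-5)] assms(2) by (simp_all add: equilateral_def)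
  ultimately show ?thesis
    by (simp add: equilateral_def)
qed

lemma perp_triangle_area_ratio:
  assumes "\<not> collinear {A, B, C}"
    and "A' \<in> perp_line_at A B \<inter> perp_line_at B C"
    and "B' \<in> perp_line_at B C \<inter> perp_line_at C A"
    and "C' \<in> perp_line_at C A \<inter> perp_line_at A B"
  shows "tri_area A' B' C' / tri_area A B C = (side_sq_sum A B C)\<^sup>2 / (16 * (tri_area A B C)\<^sup>2)"
  using perp_triangle_area[OF assms] assms(1)
  by (simp add: tri_area_pos_iff[symmetric] power2_eq_square field_simps)

lemma equilateral_triangle_exists: "\<exists>A B C :: real^2. \<not> collinear {A, B, C} \<and> equilateral A B C"
proof -
  define A B C :: "real^2" where "A = vector [0, 0]" "B = vector [2, 0]" "C = vector [1, sqrt 3]"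
  have "\<not> collinear {A, B, C}"
    by (simp add: collinear_iff_cross2 cross2_def A_B_C_def)
  moreover have "(dist A B)\<^sup>2 = 4" "(dist B C)\<^sup>2 = 4" "(dist C A)\<^sup>2 = 4"
    by (simp_all add: dist_real2_sq A_B_C_def)
  then have "equilateral A B C"
    by (simp add: equilateral_iff_sq)
  ultimately show ?thesis
    by blast
qed

lemma perp_triangle_area_ratio_ge:
  assumes "\<not> collinear {A, B, C}"
    and "A' \<in> perp_line_at A B \<inter> perp_line_at B C"
    and "B' \<in> perp_line_at B C \<inter> perp_line_at C A"
    and "C' \<in> perp_line_at C A \<inter> perp_line_at A B"
  shows "tri_area A' B' C' / tri_area A B C \<ge> 3"
proof -
  have "tri_area A B C > 0"
    using assms(1) by (simp add: tri_area_pos_iff)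
  then show ?thesis
    using weitzenboeck_inequality[of A B C]
    by (simp add: perp_triangle_area_ratio[OF assms] field_simps)
qed

lemma perp_triangle_area_ratio_eq_3_iff:
  assumes "\<not> collinear {A, B, C}"
    and "A' \<in> perp_line_at A B \<inter> perp_line_at B C"
    and "B' \<in> perp_line_at B C \<inter> perp_line_at C A"
    and "C' \<in> perp_line_at C A \<inter> perp_line_at A B"
  shows "tri_area A' B' C' / tri_area A B C = 3 \<longleftrightarrow> equilateral A B C"
proof -
  have "tri_area A B C > 0"
    using assms(1) by (simp add: tri_area_pos_iff)
  then have "tri_area A' B' C' / tri_area A B C = 3
               \<longleftrightarrow> 48 * (tri_area A B C)\<^sup>2 = (side_sq_sum A B C)\<^sup>2"
    by (auto simp: perp_triangle_area_ratio[OF assms] field_simps)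
  then show ?thesis
    by (simp add: weitzenboeck_eq_iff)
qed

theorem mainTheorem2:
  shows "(\<forall>A B C A' B' C' :: real^2.
            \<not> collinear {A, B, C}
            \<and> A' \<in> perp_line_at A B \<inter> perp_line_at B C
            \<and> B' \<in> perp_line_at B C \<inter> perp_line_at C A
            \<and> C' \<in> perp_line_at C A \<inter> perp_line_at A B
          \<longrightarrow> tri_area A' B' C' / tri_area A B C \<ge> 3
            \<and> (tri_area A' B' C' / tri_area A B C = 3 \<longleftrightarrow> equilateral A B C)
            \<and> (equilateral A B C \<longrightarrow> equilateral A' B' C'))
       \<and> (\<exists>A B C A' B' C' :: real^2.
            \<not> collinear {A, B, C}
            \<and> A' \<in> perp_line_at A B \<inter> perp_line_at B C
            \<and> B' \<in> perp_line_at B C \<inter> perp_line_at C A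
            \<and> C' \<in> perp_line_at C A \<inter> perp_line_at A B
            \<and> tri_area A' B' C' / tri_area A B C = 3)"
proof (intro conjI allI impI, goal_cases)
  case (1 A B C A' B' C')
  then show ?case
    using perp_triangle_area_ratio_ge by blast
next
  case (2 A B C A' B' C')
  then show ?case
    using perp_triangle_area_ratio_eq_3_iff by blast
next
  case (3 A B C A' B' C')
  then show ?case
    using perp_triangle_equilateral by blast
next
  case 4
  obtain A B C :: "real^2" where triangle: "\<not> collinear {A, B, C}" and "equilateral A B C"
    using equilateral_triangle_exists by blast
  moreover obtain A' where "A' \<in> perp_line_at A B \<inter> perp_line_at B C"
    using perp_lines_meet[OF triangle] by blast
  moreover obtain B' where "B' \<in> perp_line_at B C \<inter> perp_line_at C A"
    using perp_lines_meet[of B C A] triangle by (auto simp: insert_commute)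
  moreover obtain C' where "C' \<in> perp_line_at C A \<inter> perp_line_at A B"
    using perp_lines_meet[of C A B] triangle by (auto simp: insert_commute)
  ultimately show ?case
    using perp_triangle_area_ratio_eq_3_iff by blast
qed

end
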